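(* Let $N=(P,T,F,I,O)$ be a pWF net with a place $p^*$ and a transition $t^*$ such that $p^*\bullet=\{t^*\}$, $\bullet t^*=\{p^*\}$, $p^*\notin I\cup O$, and $F\cap(\bullet p^*\times t^*\bullet)=\emptyset$. Let $M$ be the net with input set $I$ and output set $O$ obtained from $N$ by removing $p^*$, $t^*$ and all edges incident to them, and adding all edges in $\bullet p^*\times t^*\bullet$ (preset and postset taken in $N$). Then $M$ is a pWF net, and if $N$ is sub-sound then $M$ is sub-sound.
   Context: Petri nets and markings. A Petri net is a triple $(P,T,F)$ with $P$ a finite set of places, $T$ a finite set of transitions, $P\cap T=\emptyset$, and $F\subseteq (P\times T)\cup(T\times P)$. For a node $x$, $\bullet x=\{y\mid (y,x)\in F\}$, $x\bullet=\{y\mid (x,y)\in F\}$. A marking is a multiset over $P$ (a function $P\to\mathbb N$); sets of places are identified with bags of multiplicity one, $+,-,\le$ are pointwise, and $k.m$ is the sum of $k$ copies of $m$. Transition $t$ is enabled at $m$ iff $\bullet t\le m$, firing gives $m-\bullet t+t\bullet$, and $m\xrightarrow{*}m'$ denotes reachability by a finite (possibly empty) firing sequence. A pWF net is $(P,T,F,I,O)$ with $(P,T,F)$ a Petri net, $I,O\subseteq P$ non-empty (input/output places), every node reachable by a directed path from some node of $I$, and some node of $O$ reachable from every node; input places may have incoming edges and output places outgoing edges. Sub-soundness. A pWF net is sub-sound if for all integers $k\ge k'\ge 0$ and every marking $m'$: if $k.I\xrightarrow{*}m'+k'.O$ then $m'\xrightarrow{*}(k-k').O$. *)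

theory Defs
  imports Main
begin

(* Nodes (places and transitions) share one type 'a; a net is given by
   P (places), T (transitions), F (flow relation).  Markings are functions
   'a => nat (multisets over places). *)

definition preset :: "('a \<times> 'a) set \<Rightarrow> 'a \<Rightarrow> 'a set" where
  "preset F x = {y. (y, x) \<in> F}"

definition postset :: "('a \<times> 'a) set \<Rightarrow> 'a \<Rightarrow> 'a set" where
  "postset F x = {y. (x, y) \<in> F}"

definition petri_net :: "'a set \<Rightarrow> 'a set \<Rightarrow> ('a \<times> 'a) set \<Rightarrow> bool" where
  "petri_net P T F \<longleftrightarrow> finite P \<and> finite T \<and> P \<inter> T = {} \<and> F \<subseteq> (P \<times> T) \<union> (T \<times> P)"

definition pWF :: "'a set \<Rightarrow> 'a set \<Rightarrow> ('a \<times> 'a) set \<Rightarrow> 'a set \<Rightarrow> 'a set \<Rightarrow> bool" where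
  "pWF P T F Inp Out \<longleftrightarrow> petri_net P T F \<and> Inp \<subseteq> P \<and> Out \<subseteq> P \<and> Inp \<noteq> {} \<and> Out \<noteq> {} \<and>
     (\<forall>x \<in> P \<union> T. \<exists>i \<in> Inp. (i, x) \<in> F\<^sup>*) \<and>
     (\<forall>x \<in> P \<union> T. \<exists>q \<in> Out. (x, q) \<in> F\<^sup>*)"

type_synonym 'a marking = "'a \<Rightarrow> nat"

definition bag :: "'a set \<Rightarrow> 'a marking" where
  "bag A = (\<lambda>p. if p \<in> A then 1 else 0)"

definition smult :: "nat \<Rightarrow> 'a marking \<Rightarrow> 'a marking" where
  "smult k m = (\<lambda>p. k * m p)"

definition enabled :: "('a \<times> 'a) set \<Rightarrow> 'a \<Rightarrow> 'a marking \<Rightarrow> bool" where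
  "enabled F t m \<longleftrightarrow> (\<forall>p. bag (preset F t) p \<le> m p)"

definition fire :: "('a \<times> 'a) set \<Rightarrow> 'a \<Rightarrow> 'a marking \<Rightarrow> 'a marking" where
  "fire F t m = (\<lambda>p. m p - bag (preset F t) p + bag (postset F t) p)"

definition step :: "'a set \<Rightarrow> ('a \<times> 'a) set \<Rightarrow> 'a marking \<Rightarrow> 'a marking \<Rightarrow> bool" where
  "step T F m m' \<longleftrightarrow> (\<exists>t \<in> T. enabled F t m \<and> m' = fire F t m)"

definition reach :: "'a set \<Rightarrow> ('a \<times> 'a) set \<Rightarrow> 'a marking \<Rightarrow> 'a marking \<Rightarrow> bool" where
  "reach T F = (step T F)\<^sup>*\<^sup>*"

definition sub_sound :: "'a set \<Rightarrow> 'a set \<Rightarrow> ('a \<times> 'a) set \<Rightarrow> 'a set \<Rightarrow> 'a set \<Rightarrow> bool" where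
  "sub_sound P T F Inp Out \<longleftrightarrow> pWF P T F Inp Out \<and>
     (\<forall>k k' (m' :: 'a marking). k' \<le> k \<longrightarrow>
        reach T F (smult k (bag Inp)) (\<lambda>p. m' p + smult k' (bag Out) p) \<longrightarrow>
        reach T F m' (smult (k - k') (bag Out)))"

end

theory Submission
  imports Defs
begin

(* A firing of the reduced net is a
      firing of the original one (producers of ps) followed by one of ts; conversely, the map
      "absorb", which moves every token of ps onto the output places of ts, sends each firing
      of the original net to zero or one firing of the reduced net.  Reduced firings never
      touch ps, so markings reachable from k.Inp have no token on ps and are fixed by absorb.
   4. Sub-soundness transfers: run the reduced firing sequence in the original net, apply
      sub-soundness there, and map the resulting sequence back with absorb. *)

lemma reach_simulation:
  assumes sim: "\<And>m m'. step T F m m' \<Longrightarrow> reach T' F' (f m) (f m')"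
    and r: "reach T F m m'"
  shows "reach T' F' (f m) (f m')"
  using r unfolding reach_def
proof (induction rule: rtranclp_induct)
  case (step y z)
  then show ?case using sim[of y z] unfolding reach_def by auto
qed simp

lemma reach_invariant:
  assumes inv: "\<And>m m'. step T F m m' \<Longrightarrow> g m' = g m"
    and r: "reach T F m m'"
  shows "g m' = g m"
  using r unfolding reach_def
  by (induction rule: rtranclp_induct) (auto dest: inv)

definition fuse_flow :: "('a \<times> 'a) set \<Rightarrow> 'a \<Rightarrow> 'a \<Rightarrow> ('a \<times> 'a) set" where
  "fuse_flow R a b = {(x, y) \<in> R. x \<notin> {a, b} \<and> y \<notin> {a, b}} \<union> (preset R a \<times> postset R b)"

text \<open>If b is the only successor of a and a the only predecessor of b, then a path of R
  between nodes other than a and b can be rerouted in the fused relation: the passage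
  through a and b is replaced by a direct arc from a producer of a to an output of b.\<close>
lemma fuse_flow_path:
  assumes a_succ: "\<And>y. (a, y) \<in> R \<longleftrightarrow> y = b"
    and b_pred: "\<And>y. (y, b) \<in> R \<longleftrightarrow> y = a"
    and ab: "a \<noteq> b" and no_back: "a \<notin> postset R b" and no_loop: "b \<notin> postset R b"
    and path: "(i, y) \<in> R\<^sup>*" and i: "i \<notin> {a, b}" and y: "y \<notin> {a, b}"
  shows "(i, y) \<in> (fuse_flow R a b)\<^sup>*"
proof -
  let ?C = "fuse_flow R a b"
  have C_iff: "(x, z) \<in> ?C \<longleftrightarrow> ((x, z) \<in> R \<and> x \<notin> {a, b} \<and> z \<notin> {a, b})
      \<or> ((x, a) \<in> R \<and> (b, z) \<in> R)" for x z
    unfolding fuse_flow_def preset_def postset_def by auto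
  text \<open>Invariant: a prefix ending outside a, b is a C-path; a prefix ending in a or b
    has a C-path to some producer of a.\<close>
  have "(y \<notin> {a, b} \<longrightarrow> (i, y) \<in> ?C\<^sup>*) \<and> (y \<in> {a, b} \<longrightarrow> (\<exists>u. (u, a) \<in> R \<and> (i, u) \<in> ?C\<^sup>*))"
    using path
  proof (induction rule: rtrancl_induct)
    case base
    then show ?case using i by simp
  next
    case (step y z)
    show ?case
    proof (cases "y \<in> {a, b}")
      case False
      then have iy: "(i, y) \<in> ?C\<^sup>*" using step.IH by blast
      show ?thesis
      proof (cases "z \<in> {a, b}")
        case False
        then have "(y, z) \<in> ?C" using C_iff step.hyps(2) \<open>y \<notin> {a, b}\<close> by blast
        then show ?thesis using iy False by (meson rtrancl.rtrancl_into_rtrancl)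
      next
        case True
        then have "z = a" using b_pred step.hyps(2) \<open>y \<notin> {a, b}\<close> by auto
        then show ?thesis using iy step.hyps(2) ab by blast
      qed
    next
      case True
      then obtain u where u: "(u, a) \<in> R" "(i, u) \<in> ?C\<^sup>*" using step.IH by blast
      show ?thesis
      proof (cases "y = a")
        case True
        then show ?thesis using a_succ step.hyps(2) u by auto
      next
        case False
        then have "(b, z) \<in> R" using True step.hyps(2) by simp
        then have "z \<notin> {a, b}" and "(u, z) \<in> ?C"
          using no_back no_loop C_iff u(1) unfolding postset_def by auto
        then show ?thesis using u(2) by (meson rtrancl.rtrancl_into_rtrancl)
      qed
    qed
  qed
  then show ?thesis using y by blast
qed

locale series_pair =
  fixes P T :: "'a set" and F :: "('a \<times> 'a) set" and ps ts :: 'a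
  assumes net: "petri_net P T F"
    and ps: "ps \<in> P" and ts: "ts \<in> T"
    and post_ps: "postset F ps = {ts}"
    and pre_ts: "preset F ts = {ps}"
    and disj: "F \<inter> (preset F ps \<times> postset F ts) = {}"
begin

abbreviation FM :: "('a \<times> 'a) set" where
  "FM \<equiv> fuse_flow F ps ts"

abbreviation B :: "'a set" where
  "B \<equiv> postset F ts"

lemma flow_bipartite: "(x, y) \<in> F \<Longrightarrow> (x \<in> P \<and> y \<in> T) \<or> (x \<in> T \<and> y \<in> P)"
  using net unfolding petri_net_def by auto

lemma places_transitions_disjoint: "P \<inter> T = {}"
  using net unfolding petri_net_def by auto

lemma ps_succ: "(ps, y) \<in> F \<longleftrightarrow> y = ts"
  using post_ps unfolding postset_def by blast

lemma ts_pred: "(y, ts) \<in> F \<longleftrightarrow> y = ps"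
  using pre_ts unfolding preset_def by blast

lemma ps_not_ts: "ps \<noteq> ts"
  using ps ts places_transitions_disjoint by auto

lemma B_places: "B \<subseteq> P"
  using flow_bipartite ts places_transitions_disjoint unfolding postset_def by blast

lemma ps_notin_B: "ps \<notin> B"
  using disj ps_succ unfolding preset_def postset_def by blast

lemma ps_notin_preset: "t \<noteq> ts \<Longrightarrow> ps \<notin> preset F t"
  using ps_succ unfolding preset_def by auto

lemma producer_outputs_not_in_B: "ps \<in> postset F t \<Longrightarrow> p \<in> postset F t \<Longrightarrow> p \<notin> B"
  using disj unfolding preset_def postset_def by auto

lemma FM_iff: "(x, y) \<in> FM \<longleftrightarrow> ((x, y) \<in> F \<and> x \<notin> {ps, ts} \<and> y \<notin> {ps, ts})
    \<or> (ps \<in> postset F x \<and> y \<in> B)"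
  unfolding fuse_flow_def preset_def postset_def by auto

lemma preset_FM: "t \<in> T \<Longrightarrow> t \<noteq> ts \<Longrightarrow> preset FM t = preset F t"
  using flow_bipartite[of _ t] ps_succ places_transitions_disjoint B_places ps ts
  unfolding preset_def FM_iff by blast

lemma postset_FM:
  "t \<in> T \<Longrightarrow> t \<noteq> ts \<Longrightarrow> postset FM t = (postset F t - {ps}) \<union> (if ps \<in> postset F t then B else {})"
proof -
  assume t: "t \<in> T" "t \<noteq> ts"
  have "t \<noteq> ps" and "(t, y) \<in> F \<Longrightarrow> y \<noteq> ts" for y
    using t flow_bipartite[of t y] places_transitions_disjoint ps ts by auto
  then show ?thesis
    using t unfolding postset_def[of FM] FM_iff by (auto simp: postset_def)
qed

lemma ts_notin_B: "ts \<notin> B"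
  using B_places ts places_transitions_disjoint by blast

lemma reduced_flow_bipartite: "FM \<subseteq> (P - {ps}) \<times> (T - {ts}) \<union> (T - {ts}) \<times> (P - {ps})"
proof (rule subrelI)
  fix x y assume "(x, y) \<in> FM"
  then consider "(x, y) \<in> F" "x \<notin> {ps, ts}" "y \<notin> {ps, ts}" | "(x, ps) \<in> F" "y \<in> B"
    unfolding FM_iff postset_def by blast
  then show "(x, y) \<in> (P - {ps}) \<times> (T - {ts}) \<union> (T - {ts}) \<times> (P - {ps})"
  proof cases
    case 1
    then show ?thesis using flow_bipartite[of x y] by auto
  next
    case 2
    have "x \<noteq> ts" using 2(1) ps_notin_B unfolding postset_def by auto
    then show ?thesis
      using 2 flow_bipartite[of x ps] ps B_places ps_notin_B ts_notin_B places_transitions_disjoint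
      by auto
  qed
qed

lemma reduced_path:
  assumes "(x, y) \<in> F\<^sup>*" and "x \<notin> {ps, ts}" and "y \<notin> {ps, ts}"
  shows "(x, y) \<in> FM\<^sup>*"
  using fuse_flow_path[OF ps_succ ts_pred ps_not_ts ps_notin_B ts_notin_B] assms by blast

lemma reduced_pWF:
  assumes N: "pWF P T F Inp Out" and notIO: "ps \<notin> Inp \<union> Out"
  shows "pWF (P - {ps}) (T - {ts}) FM Inp Out"
proof -
  have from_Inp: "\<forall>x\<in>P \<union> T. \<exists>i\<in>Inp. (i, x) \<in> F\<^sup>*"
    and to_Out: "\<forall>x\<in>P \<union> T. \<exists>q\<in>Out. (x, q) \<in> F\<^sup>*"
    using N unfolding pWF_def by auto
  have outside: "x \<notin> {ps, ts}" if "x \<in> Inp \<union> Out \<union> (P - {ps}) \<union> (T - {ts})" for x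
    using that notIO N ps ts places_transitions_disjoint unfolding pWF_def by blast
  have "\<exists>i\<in>Inp. (i, x) \<in> FM\<^sup>*" if x: "x \<in> (P - {ps}) \<union> (T - {ts})" for x
  proof -
    have "x \<in> P \<union> T" using x by blast
    then obtain i where "i \<in> Inp" "(i, x) \<in> F\<^sup>*" using from_Inp by blast
    then show ?thesis using reduced_path outside x by blast
  qed
  moreover have "\<exists>q\<in>Out. (x, q) \<in> FM\<^sup>*" if x: "x \<in> (P - {ps}) \<union> (T - {ts})" for x
  proof -
    have "x \<in> P \<union> T" using x by blast
    then obtain q where "q \<in> Out" "(x, q) \<in> F\<^sup>*" using to_Out by blast
    then show ?thesis using reduced_path outside x by blast
  qed
  ultimately show ?thesis
    using N notIO places_transitions_disjoint reduced_flow_bipartite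
    unfolding pWF_def petri_net_def by auto
qed

text \<open>A reduced firing of t is simulated by firing t, and then ts if t produces into ps.\<close>
lemma reduced_step_simulated:
  assumes st: "step (T - {ts}) FM m m2"
  shows "reach T F m m2"
proof -
  obtain t where t: "t \<in> T" "t \<noteq> ts" and en: "enabled FM t m" and m2: "m2 = fire FM t m"
    using st unfolding step_def by auto
  define m1 where "m1 = fire F t m"
  have en1: "enabled F t m" using en preset_FM[OF t] unfolding enabled_def by simp
  have s1: "step T F m m1" unfolding step_def m1_def using t en1 by blast
  show ?thesis
  proof (cases "ps \<in> postset F t")
    case True
    have en2: "enabled F ts m1"
      unfolding enabled_def pre_ts m1_def fire_def bag_def
      using True ps_notin_preset[OF t(2)] by auto
    have "fire F ts m1 = m2"
    proof
      fix p
      show "fire F ts m1 p = m2 p"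
        unfolding m2 m1_def fire_def pre_ts preset_FM[OF t] postset_FM[OF t]
        using True ps_notin_preset[OF t(2)] producer_outputs_not_in_B[OF True] ps_notin_B
        by (cases "p = ps"; cases "p \<in> B"; auto simp add: bag_def)
    qed
    moreover have "step T F m1 (fire F ts m1)" unfolding step_def using ts en2 by blast
    ultimately show ?thesis using s1 unfolding reach_def by auto
  next
    case False
    have "m1 = m2"
    proof
      fix p
      show "m1 p = m2 p"
        unfolding m2 m1_def fire_def preset_FM[OF t] postset_FM[OF t]
        using False by (cases "p = ps"; simp add: bag_def)
    qed
    then show ?thesis using s1 unfolding reach_def by auto
  qed
qed

text \<open>The reduced net has no arc at ps, so its firings leave the tokens on ps unchanged.\<close>
lemma reduced_step_keeps_ps:
  assumes "step (T - {ts}) FM m m2"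
  shows "m2 ps = m ps"
proof -
  obtain t where t: "t \<in> T" "t \<noteq> ts" and m2: "m2 = fire FM t m"
    using assms unfolding step_def by auto
  show ?thesis
    unfolding m2 fire_def preset_FM[OF t] postset_FM[OF t]
    using ps_notin_preset[OF t(2)] ps_notin_B by (auto simp: bag_def)
qed

text \<open>Firing ts in advance: every token on ps is moved to the output places of ts.\<close>
definition absorb :: "'a marking \<Rightarrow> 'a marking" where
  "absorb m = (\<lambda>p. if p = ps then 0 else m p + m ps * bag B p)"

lemma absorb_id: "m ps = 0 \<Longrightarrow> absorb m = m"
  unfolding absorb_def by auto

text \<open>Under absorb a firing of ts becomes invisible and any other firing becomes the
  corresponding reduced firing.\<close>
lemma original_step_simulated:
  assumes st: "step T F m m2"
  shows "reach (T - {ts}) FM (absorb m) (absorb m2)"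
proof -
  obtain t where t: "t \<in> T" and en: "enabled F t m" and m2: "m2 = fire F t m"
    using st unfolding step_def by auto
  show ?thesis
  proof (cases "t = ts")
    case True
    have "m ps \<ge> 1" using en unfolding enabled_def True pre_ts bag_def
      by (metis singletonI)
    then have "absorb m2 = absorb m"
      unfolding m2 True absorb_def fire_def pre_ts
      using ps_notin_B by (auto simp add: bag_def)
    then show ?thesis unfolding reach_def by simp
  next
    case False
    have le: "bag (preset F t) p \<le> m p" for p using en unfolding enabled_def by auto
    have en': "enabled FM t (absorb m)"
      unfolding enabled_def preset_FM[OF t False]
    proof
      fix p
      show "bag (preset F t) p \<le> absorb m p"
        using le[of p] ps_notin_preset[OF False] unfolding absorb_def
        by (cases "p = ps"; simp add: bag_def)
    qed
    have "fire FM t (absorb m) = absorb m2"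
    proof
      fix p
      show "fire FM t (absorb m) p = absorb m2 p"
        unfolding m2 absorb_def fire_def preset_FM[OF t False] postset_FM[OF t False]
        using le[of p] ps_notin_preset[OF False] ps_notin_B producer_outputs_not_in_B[of t p]
        by (cases "p = ps"; cases "p \<in> B"; cases "p \<in> postset F t";
            cases "ps \<in> postset F t"; simp add: bag_def)
    qed
    then have "step (T - {ts}) FM (absorb m) (absorb m2)"
      unfolding step_def using t False en' by auto
    then show ?thesis unfolding reach_def by auto
  qed
qed

lemma reduced_sub_sound:
  assumes SS: "sub_sound P T F Inp Out" and notIO: "ps \<notin> Inp \<union> Out"
  shows "sub_sound (P - {ps}) (T - {ts}) FM Inp Out"
  unfolding sub_sound_def
proof (intro conjI allI impI)
  show "pWF (P - {ps}) (T - {ts}) FM Inp Out"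
    using SS notIO reduced_pWF unfolding sub_sound_def by blast
next
  fix k k' :: nat and m' :: "'a marking"
  let ?final = "smult (k - k') (bag Out)"
  assume kk: "k' \<le> k"
    and r: "reach (T - {ts}) FM (smult k (bag Inp)) (\<lambda>p. m' p + smult k' (bag Out) p)"
  have "m' ps + smult k' (bag Out) ps = smult k (bag Inp) ps"
    using reach_invariant[where g = "\<lambda>m. m ps", OF _ r] reduced_step_keeps_ps by simp
  then have m'_ps: "m' ps = 0" using notIO by (simp add: smult_def bag_def)
  have "reach T F m' ?final"
    using SS kk reach_simulation[where f = id, OF reduced_step_simulated r]
    unfolding sub_sound_def by auto
  from reach_simulation[where f = absorb, OF original_step_simulated this]
  have "reach (T - {ts}) FM (absorb m') (absorb ?final)" .
  moreover have "absorb m' = m'" using m'_ps by (rule absorb_id)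
  moreover have "absorb ?final = ?final"
    using notIO by (intro absorb_id) (simp add: smult_def bag_def)
  ultimately show "reach (T - {ts}) FM m' ?final" by simp
qed

end

theorem mainTheorem12:
  fixes P T Inp Out :: "'a set" and F :: "('a \<times> 'a) set" and ps ts :: 'a
  assumes N: "pWF P T F Inp Out"
    and ps: "ps \<in> P" and ts: "ts \<in> T"
    and post_ps: "postset F ps = {ts}"
    and pre_ts: "preset F ts = {ps}"
    and notIO: "ps \<notin> Inp \<union> Out"
    and disj: "F \<inter> (preset F ps \<times> postset F ts) = {}"
  defines "PM \<equiv> P - {ps}"
    and "TM \<equiv> T - {ts}"
    and "FM \<equiv> {(x, y) \<in> F. x \<notin> {ps, ts} \<and> y \<notin> {ps, ts}} \<union> (preset F ps \<times> postset F ts)"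
  shows "pWF PM TM FM Inp Out \<and> (sub_sound P T F Inp Out \<longrightarrow> sub_sound PM TM FM Inp Out)"
proof -
  interpret series_pair P T F ps ts
    using N ps ts post_ps pre_ts disj unfolding pWF_def by unfold_locales auto
  have "FM = fuse_flow F ps ts" unfolding FM_def fuse_flow_def ..
  then show ?thesis
    using reduced_pWF[OF N notIO] reduced_sub_sound[OF _ notIO]
    unfolding PM_def TM_def by simp
qed

end
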